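(* The topological graph $\mathbb G$ is hereditarily unicoherent: for every two closed connected subsets $P,Q\subseteq V(\mathbb G)$, the intersection $P\cap Q$ is connected.
   Context: A graph is a pair $A=(V(A),E(A))$ with $E(A)\subseteq V(A)^2$ reflexive and symmetric; a topological graph additionally has $V$ compact, second countable, zero-dimensional and $E$ closed. Epimorphisms are (continuous) edge-preserving maps surjective on vertices and edges. A vertex set $S$ is disconnected if there are nonempty closed subsets $P,Q$ of $S$ with $P\cup Q=S$ and no edge $\langle a,b\rangle$ with $a\in P$, $b\in Q$; otherwise connected (the empty set counts as connected); components are maximal connected subsets. An epimorphism $f\colon A\to B$ is confluent if for every connected $Q\subseteq V(B)$ each component $C$ of $f^{-1}(Q)$ has $f(C)=Q$. $\mathbb G$ is the projective Fraïssé limit of the class of finite connected graphs with confluent epimorphisms: the unique topological graph such that (1) every finite connected graph is a confluent epimorphic image of $\mathbb G$; (2) for finite connected $A,B$ and confluent epimorphisms $f\colon\mathbb G\to A$, $g\colon B\to A$ there is a confluent epimorphism $h\colon\mathbb G\to B$ with $f=g\circ h$; (3) for each $\varepsilon>0$ some confluent epimorphism from $\mathbb G$ onto a finite connected graph has all point-preimages of diameter $<\varepsilon$. *)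

theory Defs
  imports "HOL-Analysis.Analysis"
begin

definition is_graph :: "'a set \<Rightarrow> ('a \<times> 'a) set \<Rightarrow> bool" where
  "is_graph V E \<longleftrightarrow> E \<subseteq> V \<times> V \<and> (\<forall>x\<in>V. (x, x) \<in> E) \<and> (\<forall>x y. (x, y) \<in> E \<longrightarrow> (y, x) \<in> E)"

text \<open>Finite graphs (vertices taken, without loss of generality, among the naturals,
  with their discrete topology).\<close>
definition finite_graph :: "nat set \<Rightarrow> (nat \<times> nat) set \<Rightarrow> bool" where
  "finite_graph V E \<longleftrightarrow> finite V \<and> is_graph V E"

text \<open>Topological graphs, on a metric space of vertices (compact, second countable,
  zero-dimensional vertex set, closed edge set).\<close>
definition topological_graph :: "'a::metric_space set \<Rightarrow> ('a \<times> 'a) set \<Rightarrow> bool" where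
  "topological_graph V E \<longleftrightarrow> is_graph V E \<and> compact V
     \<and> (\<exists>\<B>. countable \<B> \<and> (\<forall>b\<in>\<B>. openin (top_of_set V) b)
            \<and> (\<forall>U. openin (top_of_set V) U \<longrightarrow> (\<exists>\<C>\<subseteq>\<B>. U = \<Union>\<C>)))
     \<and> (\<forall>U x. openin (top_of_set V) U \<and> x \<in> U \<longrightarrow>
            (\<exists>W. openin (top_of_set V) W \<and> closedin (top_of_set V) W \<and> x \<in> W \<and> W \<subseteq> U))
     \<and> closed E"

definition gconnected :: "('a::topological_space \<times> 'a) set \<Rightarrow> 'a set \<Rightarrow> bool" where
  "gconnected E S \<longleftrightarrow> \<not> (\<exists>P Q. P \<noteq> {} \<and> Q \<noteq> {}
      \<and> closedin (top_of_set S) P \<and> closedin (top_of_set S) Q \<and> P \<union> Q = S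
      \<and> (\<forall>a\<in>P. \<forall>b\<in>Q. (a, b) \<notin> E))"

definition gcomponent :: "('a::topological_space \<times> 'a) set \<Rightarrow> 'a set \<Rightarrow> 'a set \<Rightarrow> bool" where
  "gcomponent E S C \<longleftrightarrow> C \<subseteq> S \<and> gconnected E C
      \<and> (\<forall>D. C \<subseteq> D \<and> D \<subseteq> S \<and> gconnected E D \<longrightarrow> D = C)"

definition epimorphism :: "'a::topological_space set \<Rightarrow> ('a \<times> 'a) set
     \<Rightarrow> 'b::topological_space set \<Rightarrow> ('b \<times> 'b) set \<Rightarrow> ('a \<Rightarrow> 'b) \<Rightarrow> bool" where
  "epimorphism VA EA VB EB f \<longleftrightarrow> continuous_on VA f \<and> f ` VA = VB
      \<and> (\<lambda>(x, y). (f x, f y)) ` EA = EB"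

definition confluent :: "'a::topological_space set \<Rightarrow> ('a \<times> 'a) set
     \<Rightarrow> 'b::topological_space set \<Rightarrow> ('b \<times> 'b) set \<Rightarrow> ('a \<Rightarrow> 'b) \<Rightarrow> bool" where
  "confluent VA EA VB EB f \<longleftrightarrow> epimorphism VA EA VB EB f
      \<and> (\<forall>Q. Q \<subseteq> VB \<and> gconnected EB Q \<longrightarrow>
            (\<forall>C. gcomponent EA (VA \<inter> f -` Q) C \<longrightarrow> f ` C = Q))"

definition fin_conn_graph :: "nat set \<Rightarrow> (nat \<times> nat) set \<Rightarrow> bool" where
  "fin_conn_graph V E \<longleftrightarrow> finite_graph V E \<and> V \<noteq> {} \<and> gconnected E V"

text \<open>The characterizing properties (1)-(3) of the projective Fraisse limit \<G>.\<close>
definition is_proj_fraisse_limit :: "'a::metric_space set \<Rightarrow> ('a \<times> 'a) set \<Rightarrow> bool" where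
  "is_proj_fraisse_limit V E \<longleftrightarrow> topological_graph V E
   \<and> (\<forall>A EA. fin_conn_graph A EA \<longrightarrow> (\<exists>f. confluent V E A EA f))
   \<and> (\<forall>A EA B EB f g. fin_conn_graph A EA \<and> fin_conn_graph B EB
        \<and> confluent V E A EA f \<and> confluent B EB A EA g
        \<longrightarrow> (\<exists>h. confluent V E B EB h \<and> (\<forall>x\<in>V. f x = g (h x))))
   \<and> (\<forall>\<epsilon>>0. \<exists>A EA f. fin_conn_graph A EA \<and> confluent V E A EA f
        \<and> (\<forall>a\<in>A. diameter (V \<inter> f -` {a}) < \<epsilon>))"

end

theory Submission
  imports Defs
begin

text \<open>
  Suppose \<open>P \<inter> Q\<close> splits into nonempty closed sets \<open>X\<close>, \<open>Y\<close> with no edge between them. By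
  compactness, every map \<open>f\<close> onto a finite graph \<open>A\<close> with small enough fibres still sees the
  splitting: whether a vertex has a preimage close to \<open>Y\<close> is a function \<open>\<phi>\<close> that is invariant
  along the edges of \<open>f(P) \<inter> f(Q)\<close> and separates \<open>f(X)\<close> from \<open>f(Y)\<close>.

  Now take the double cover \<open>B\<close> of \<open>A\<close> in which exactly the edges of \<open>f(Q)\<close> not inside \<open>f(P)\<close> across
  which \<open>\<phi>\<close> jumps are twisted. A lift of \<open>f\<close> to \<open>B\<close> has constant sheet index on the connected
  image of \<open>P\<close>, and sheet index differing from \<open>\<phi>\<close> by a constant on the connected image of \<open>Q\<close>;
  at points of \<open>X\<close> and \<open>Y\<close> this forces \<open>\<phi>\<close> to agree, which is absurd. The same argument applied
  to a would-be trivialisation of the twist shows that \<open>B\<close> is connected, and its projection onto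
  \<open>A\<close> is confluent because it lifts edges; so the lift exists by the extension property of the
  Fraisse limit.
\<close>

section \<open>Metric separation\<close>

lemma separate_compact_closed_metric:
  fixes S T :: "'a::metric_space set"
  assumes "compact S" "closed T" "S \<inter> T = {}"
  shows "\<exists>d>0. \<forall>x\<in>S. \<forall>y\<in>T. d \<le> dist x y"
proof (cases "S = {} \<or> T = {}")
  case True
  then show ?thesis by (auto intro: exI[of _ 1])
next
  case False
  have "continuous_on S (\<lambda>x. infdist x T)"
    by (intro continuous_intros)
  then obtain x0 where x0: "x0 \<in> S" "\<forall>x\<in>S. infdist x0 T \<le> infdist x T"
    using continuous_attains_inf[OF assms(1)] False by blast
  have "infdist x0 T > 0"
    using infdist_pos_not_in_closed assms False x0 by blast
  moreover have "infdist x0 T \<le> dist x y" if "x \<in> S" "y \<in> T" for x y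
    using x0 infdist_le[OF that(2), of x] that(1) by force
  ultimately show ?thesis by blast
qed

lemma infdist_lessE:
  assumes "infdist u X < r" "X \<noteq> {}"
  obtains x where "x \<in> X" "dist u x < r"
  using assms by (metis infdist_notempty cINF_less_iff bdd_below_image_dist)

lemma closed_relation_avoids_thickenings:
  fixes X Y :: "'a::metric_space set"
  assumes "compact X" "compact Y" "X \<noteq> {}" "Y \<noteq> {}" "closed R" "R \<inter> (X \<times> Y) = {}"
  obtains \<eta> where "\<eta> > 0" "\<And>u v. infdist u X < \<eta> \<Longrightarrow> infdist v Y < \<eta> \<Longrightarrow> (u, v) \<notin> R"
proof -
  obtain d where d: "d > 0" "\<forall>z\<in>X \<times> Y. \<forall>e\<in>R. d \<le> dist z e"
    using separate_compact_closed_metric[of "X \<times> Y" R] compact_Times assms by blast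
  have "(u, v) \<notin> R" if u: "infdist u X < d/2" and v: "infdist v Y < d/2" for u v
  proof -
    obtain x where x: "x \<in> X" "dist u x < d/2"
      using infdist_lessE[OF u assms(3)] by blast
    obtain y where y: "y \<in> Y" "dist v y < d/2"
      using infdist_lessE[OF v assms(4)] by blast
    have "dist (x, y) (u, v) \<le> dist x u + dist y v"
      by (simp add: dist_Pair_Pair sqrt_sum_squares_le_sum)
    also have "\<dots> < d"
      using x y by (simp add: dist_commute)
    finally show ?thesis
      using d x y by force
  qed
  then show ?thesis
    using that[of "d/2"] d(1) by simp
qed

lemma close_points_near_intersection:
  fixes P Q :: "'a::metric_space set"
  assumes "compact P" "closed Q" "\<eta> > 0"
  obtains \<epsilon> where "\<epsilon> > 0"
    "\<And>p q. p \<in> P \<Longrightarrow> q \<in> Q \<Longrightarrow> dist p q < \<epsilon> \<Longrightarrow> infdist p (P \<inter> Q) < \<eta>"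
proof -
  let ?far = "P \<inter> {p. \<eta> \<le> infdist p (P \<inter> Q)}"
  have "closed {p. \<eta> \<le> infdist p (P \<inter> Q)}"
    by (intro closed_Collect_le continuous_intros)
  then have "compact ?far"
    using assms(1) by (simp add: compact_Int_closed)
  moreover have "?far \<inter> Q = {}"
    using assms(3) by auto
  ultimately obtain d where d: "d > 0" "\<forall>p\<in>?far. \<forall>q\<in>Q. d \<le> dist p q"
    using separate_compact_closed_metric assms(2) by blast
  have "infdist p (P \<inter> Q) < \<eta>" if "p \<in> P" "q \<in> Q" "dist p q < d" for p q
    using that d(2) not_less by fastforce
  then show ?thesis
    using that d(1) by blast
qed

section \<open>Connectedness of graphs\<close>

definition edge_invariant :: "('a \<times> 'a) set \<Rightarrow> 'a set \<Rightarrow> ('a \<Rightarrow> 'b) \<Rightarrow> bool" where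
  "edge_invariant E S \<phi> \<longleftrightarrow> (\<forall>a\<in>S. \<forall>b\<in>S. (a, b) \<in> E \<longrightarrow> \<phi> a = \<phi> b)"

lemma gconnectedI:
  assumes "\<And>P Q. P \<noteq> {} \<Longrightarrow> Q \<noteq> {} \<Longrightarrow> closedin (top_of_set S) P \<Longrightarrow> closedin (top_of_set S) Q
      \<Longrightarrow> P \<union> Q = S \<Longrightarrow> \<forall>a\<in>P. \<forall>b\<in>Q. (a, b) \<notin> E \<Longrightarrow> False"
  shows "gconnected E S"
  using assms unfolding gconnected_def by blast

lemma gconnectedD:
  assumes "gconnected E S" "P \<noteq> {}" "Q \<noteq> {}" "closedin (top_of_set S) P" "closedin (top_of_set S) Q"
    "P \<union> Q = S"
  shows "\<exists>a\<in>P. \<exists>b\<in>Q. (a, b) \<in> E"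
  using assms unfolding gconnected_def by blast

lemma is_graphD:
  assumes "is_graph V E"
  shows "E \<subseteq> V \<times> V" "refl_on V E" "sym_on V E"
  using assms by (auto simp: is_graph_def refl_on_def sym_on_def)

lemma gconnected_singleton:
  assumes "(z, z) \<in> E"
  shows "gconnected E {z}"
proof (rule gconnectedI)
  fix P Q
  assume "P \<noteq> {}" "Q \<noteq> {}" "P \<union> Q = {z}" "\<forall>a\<in>P. \<forall>b\<in>Q. (a, b) \<notin> E"
  then have "z \<in> P" "z \<in> Q"
    by auto
  then show False
    using assms \<open>\<forall>a\<in>P. \<forall>b\<in>Q. (a, b) \<notin> E\<close> by blast
qed

lemma gconnected_image:
  assumes "gconnected E P" "continuous_on P f"
    and "\<And>u v. u \<in> P \<Longrightarrow> v \<in> P \<Longrightarrow> (u, v) \<in> E \<Longrightarrow> (f u, f v) \<in> E'"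
  shows "gconnected E' (f ` P)"
proof (rule gconnectedI)
  fix S1 S2
  assume S: "S1 \<noteq> {}" "S2 \<noteq> {}" "closedin (top_of_set (f ` P)) S1" "closedin (top_of_set (f ` P)) S2"
    "S1 \<union> S2 = f ` P" "\<forall>a\<in>S1. \<forall>b\<in>S2. (a, b) \<notin> E'"
  have nonempty: "P \<inter> f -` S' \<noteq> {}" if "S' \<noteq> {}" "S' \<subseteq> f ` P" for S'
    using that by fast
  have "P \<inter> f -` S1 \<noteq> {}" "P \<inter> f -` S2 \<noteq> {}"
    using nonempty S(1,2,5) by (metis Un_upper1, metis Un_upper2)
  moreover have "closedin (top_of_set P) (P \<inter> f -` S1)" "closedin (top_of_set P) (P \<inter> f -` S2)"
    by (rule continuous_closedin_preimage_gen[OF assms(2) _ S(3)], force)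
       (rule continuous_closedin_preimage_gen[OF assms(2) _ S(4)], force)
  moreover have "(P \<inter> f -` S1) \<union> (P \<inter> f -` S2) = P"
    using S(5) by auto
  ultimately have "\<exists>a\<in>P \<inter> f -` S1. \<exists>b\<in>P \<inter> f -` S2. (a, b) \<in> E"
    by (rule gconnectedD[OF assms(1)])
  then show False
    using S(6) assms(3) by blast
qed

lemma epimorphism_gconnected_image:
  assumes "epimorphism VA EA VB EB f" "P \<subseteq> VA" "gconnected EA P"
  shows "gconnected EB (f ` P)"
proof (rule gconnected_image[OF assms(3)])
  show "continuous_on P f"
    using assms(1,2) continuous_on_subset unfolding epimorphism_def by blast
  show "(f u, f v) \<in> EB" if "(u, v) \<in> EA" for u v
    using assms(1) that unfolding epimorphism_def by force
qed

lemma closedin_discrete: "P \<subseteq> S \<Longrightarrow> closedin (top_of_set S) (P :: 'a::discrete_topology set)"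
  by (rule closed_subset) (simp_all add: closed_def open_discrete)

lemma gconnected_edge_invariant_eq:
  fixes S :: "'a::discrete_topology set"
  assumes "gconnected E S" "edge_invariant E S \<phi>" "a \<in> S" "b \<in> S"
  shows "\<phi> a = \<phi> b"
proof (rule ccontr)
  assume "\<phi> a \<noteq> \<phi> b"
  let ?P = "{s\<in>S. \<phi> s = \<phi> a}" and ?Q = "{s\<in>S. \<phi> s \<noteq> \<phi> a}"
  have "?P \<noteq> {}" "?Q \<noteq> {}"
    using assms(3,4) \<open>\<phi> a \<noteq> \<phi> b\<close> by auto
  moreover have "closedin (top_of_set S) ?P" "closedin (top_of_set S) ?Q"
    by (auto intro: closedin_discrete)
  moreover have "?P \<union> ?Q = S"
    by auto
  ultimately have "\<exists>s\<in>?P. \<exists>t\<in>?Q. (s, t) \<in> E"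
    by (rule gconnectedD[OF assms(1)])
  then show False
    using assms(2) unfolding edge_invariant_def by auto
qed

text \<open>Reflexivity is needed because the two pieces in \<^const>\<open>gconnected\<close> need not be disjoint.\<close>

lemma gconnected_if_edge_invariants_const:
  fixes S :: "'a::discrete_topology set"
  assumes "refl_on S E" "sym_on S E"
    and "\<And>\<phi> :: 'a \<Rightarrow> bool. edge_invariant E S \<phi> \<Longrightarrow> \<forall>a\<in>S. \<forall>b\<in>S. \<phi> a = \<phi> b"
  shows "gconnected E S"
proof (rule gconnectedI)
  fix P Q
  assume PQ: "P \<noteq> {}" "Q \<noteq> {}" "P \<union> Q = S" "\<forall>a\<in>P. \<forall>b\<in>Q. (a, b) \<notin> E"
  have "edge_invariant E S (\<lambda>s. s \<in> P)"
    using PQ(3,4) assms(2) unfolding edge_invariant_def sym_on_def by blast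
  moreover obtain p q where "p \<in> P" "q \<in> Q"
    using PQ(1,2) by blast
  moreover have "q \<notin> P"
    using \<open>q \<in> Q\<close> PQ(3,4) assms(1) unfolding refl_on_def by blast
  ultimately show False
    using assms(3) PQ(3) by blast
qed

lemma gconnected_insert:
  fixes C :: "'a::discrete_topology set"
  assumes "gconnected E C" "c \<in> C" "(c, n) \<in> E" "refl_on (insert n C) E" "sym_on (insert n C) E"
  shows "gconnected E (insert n C)"
proof (rule gconnected_if_edge_invariants_const[OF assms(4,5)])
  fix \<phi> :: "'a \<Rightarrow> bool"
  assume inv: "edge_invariant E (insert n C) \<phi>"
  then have "\<phi> a = \<phi> c" if "a \<in> C" for a
    using gconnected_edge_invariant_eq[OF assms(1), of \<phi>] that assms(2)
    unfolding edge_invariant_def by blast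
  moreover have "\<phi> n = \<phi> c"
    using inv assms(2,3) unfolding edge_invariant_def by force
  ultimately show "\<forall>a\<in>insert n C. \<forall>b\<in>insert n C. \<phi> a = \<phi> b"
    by auto
qed

lemma gcomponent_nonempty:
  assumes "gcomponent E S C" "m \<in> S" "(m, m) \<in> E"
  shows "C \<noteq> {}"
proof
  assume "C = {}"
  then have "{m} = C"
    using assms gconnected_singleton unfolding gcomponent_def by blast
  then show False
    using \<open>C = {}\<close> by simp
qed

lemma gcomponent_closed_under_edges:
  fixes S :: "'a::discrete_topology set"
  assumes "gcomponent E S C" "refl_on S E" "sym_on S E" "c \<in> C" "n \<in> S" "(c, n) \<in> E"
  shows "n \<in> C"
proof -
  have C: "C \<subseteq> S" "gconnected E C" "\<And>D. C \<subseteq> D \<Longrightarrow> D \<subseteq> S \<Longrightarrow> gconnected E D \<Longrightarrow> D = C"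
    using assms(1) unfolding gcomponent_def by auto
  then have "insert n C \<subseteq> S"
    using assms(5) by simp
  moreover from this have "refl_on (insert n C) E" "sym_on (insert n C) E"
    using assms(2) sym_on_subset[OF assms(3)] unfolding refl_on_def by auto
  then have "gconnected E (insert n C)"
    by (rule gconnected_insert[OF C(2) assms(4,6)])
  ultimately show ?thesis
    using C(3)[of "insert n C"] by auto
qed

lemma confluent_if_lifts_edges:
  fixes g :: "'a::discrete_topology \<Rightarrow> 'b::discrete_topology"
  assumes epi: "epimorphism B EB A EA g" and refl: "refl_on B EB" and sym: "sym_on B EB"
    and lift: "\<And>m b. m \<in> B \<Longrightarrow> (g m, b) \<in> EA \<Longrightarrow> \<exists>n\<in>B. g n = b \<and> (m, n) \<in> EB"
  shows "confluent B EB A EA g"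
  unfolding confluent_def
proof (intro conjI allI impI epi)
  fix Q C
  assume Q: "Q \<subseteq> A \<and> gconnected EA Q" and comp: "gcomponent EB (B \<inter> g -` Q) C"
  then have CQ: "C \<subseteq> B \<inter> g -` Q"
    by (simp add: gcomponent_def)
  have refl': "refl_on (B \<inter> g -` Q) EB" and sym': "sym_on (B \<inter> g -` Q) EB"
    using refl sym_on_subset[OF sym] unfolding refl_on_def by auto
  have "C \<noteq> {}" if b: "b \<in> Q" for b
  proof -
    obtain m where "m \<in> B" "g m = b"
      using b Q epi unfolding epimorphism_def by auto
    then show ?thesis
      using gcomponent_nonempty[OF comp] refl_onD[OF refl'] b by auto
  qed
  moreover have False if "C \<noteq> {}" "g ` C \<noteq> Q"
  proof -
    have "g ` C \<noteq> {}" "Q - g ` C \<noteq> {}" "g ` C \<union> (Q - g ` C) = Q"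
      using that CQ by auto
    moreover have "closedin (top_of_set Q) (g ` C)" "closedin (top_of_set Q) (Q - g ` C)"
      using CQ by (auto intro: closedin_discrete)
    ultimately have "\<exists>a\<in>g ` C. \<exists>b\<in>Q - g ` C. (a, b) \<in> EA"
      using gconnectedD[of EA Q "g ` C" "Q - g ` C"] Q by simp
    then obtain c b where cb: "c \<in> C" "b \<in> Q" "b \<notin> g ` C" "(g c, b) \<in> EA"
      by auto
    moreover have "c \<in> B"
      using cb(1) CQ by auto
    ultimately obtain n where n: "n \<in> B" "g n = b" "(c, n) \<in> EB"
      using lift by blast
    then have "n \<in> C"
      using gcomponent_closed_under_edges[OF comp refl' sym' cb(1)] cb(2) by simp
    then show False
      using cb(3) n(2) by auto
  qed
  ultimately show "g ` C = Q"
    using CQ by auto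
qed

section \<open>Twisted double covers\<close>

text \<open>
  The lifts of a vertex \<open>a\<close> are \<open>2 * a\<close> and \<open>2 * a + 1\<close>, the parity being the sheet.
\<close>

definition double_cover_vertices :: "nat set \<Rightarrow> nat set" where
  "double_cover_vertices A = {m. m div 2 \<in> A}"

definition twisted_cover_edges :: "(nat \<times> nat) set \<Rightarrow> (nat \<Rightarrow> nat \<Rightarrow> bool) \<Rightarrow> (nat \<times> nat) set" where
  "twisted_cover_edges EA tw =
     {(m, n). (m div 2, n div 2) \<in> EA \<and> (even m \<noteq> even n \<longleftrightarrow> tw (m div 2) (n div 2))}"

lemma double_cover_vertices_eq:
  "double_cover_vertices A = (\<lambda>a. 2 * a) ` A \<union> (\<lambda>a. 2 * a + 1) ` A"
proof
  show "double_cover_vertices A \<subseteq> (\<lambda>a. 2 * a) ` A \<union> (\<lambda>a. 2 * a + 1) ` A"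
  proof
    fix m
    assume "m \<in> double_cover_vertices A"
    then have "m div 2 \<in> A"
      by (simp add: double_cover_vertices_def)
    moreover have "m = 2 * (m div 2) \<or> m = 2 * (m div 2) + 1"
      by presburger
    ultimately show "m \<in> (\<lambda>a. 2 * a) ` A \<union> (\<lambda>a. 2 * a + 1) ` A"
      by blast
  qed
qed (auto simp: double_cover_vertices_def)

lemma is_graph_twisted_cover:
  assumes "is_graph A EA" "\<And>a b. tw a b \<Longrightarrow> tw b a" "\<And>a. \<not> tw a a"
  shows "is_graph (double_cover_vertices A) (twisted_cover_edges EA tw)"
  using assms unfolding is_graph_def double_cover_vertices_def twisted_cover_edges_def by auto

lemma twisted_cover_lifts_edges:
  assumes "EA \<subseteq> A \<times> A" "(m div 2, b) \<in> EA"
  shows "\<exists>n\<in>double_cover_vertices A. n div 2 = b \<and> (m, n) \<in> twisted_cover_edges EA tw"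
proof -
  define n where "n = (if even m \<noteq> tw (m div 2) b then 2 * b else 2 * b + 1)"
  have "n div 2 = b" "even n \<longleftrightarrow> even m \<noteq> tw (m div 2) b"
    by (simp_all add: n_def)
  then show ?thesis
    using assms by (auto simp: double_cover_vertices_def twisted_cover_edges_def)
qed

lemma twisted_cover_confluent:
  assumes "is_graph A EA" "\<And>a b. tw a b \<Longrightarrow> tw b a" "\<And>a. \<not> tw a a"
  shows "confluent (double_cover_vertices A) (twisted_cover_edges EA tw) A EA (\<lambda>m. m div 2)"
proof (rule confluent_if_lifts_edges)
  show "refl_on (double_cover_vertices A) (twisted_cover_edges EA tw)"
    "sym_on (double_cover_vertices A) (twisted_cover_edges EA tw)"
    using is_graphD[OF is_graph_twisted_cover[of A EA tw, OF assms]] by simp_all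
  show lift: "\<exists>n\<in>double_cover_vertices A. n div 2 = b \<and> (m, n) \<in> twisted_cover_edges EA tw"
    if "(m div 2, b) \<in> EA" for m b
    using twisted_cover_lifts_edges is_graphD(1)[OF assms(1)] that by blast
  have "(\<lambda>m. m div 2) ` double_cover_vertices A = A"
    by (simp add: double_cover_vertices_eq image_Un image_image)
  moreover have "(\<lambda>(m, n). (m div 2, n div 2)) ` twisted_cover_edges EA tw = EA"
  proof
    show "EA \<subseteq> (\<lambda>(m, n). (m div 2, n div 2)) ` twisted_cover_edges EA tw"
    proof
      fix e
      assume "e \<in> EA"
      then obtain a b where e: "e = (a, b)" "((2 * a) div 2, b) \<in> EA"
        by (cases e) simp
      then obtain n where "n div 2 = b" "(2 * a, n) \<in> twisted_cover_edges EA tw"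
        using lift by blast
      then show "e \<in> (\<lambda>(m, n). (m div 2, n div 2)) ` twisted_cover_edges EA tw"
        using e(1) by (auto intro: image_eqI[of _ _ "(2 * a, n)"])
    qed
  qed (auto simp: twisted_cover_edges_def)
  ultimately show "epimorphism (double_cover_vertices A) (twisted_cover_edges EA tw) A EA (\<lambda>m. m div 2)"
    by (simp add: epimorphism_def)
qed

lemma twisted_cover_edge_invariant_step:
  assumes "edge_invariant (twisted_cover_edges EA tw) (double_cover_vertices A) \<phi>"
    and "EA \<subseteq> A \<times> A" "(a, b) \<in> EA"
  shows "\<phi> (2 * a) = \<phi> (if tw a b then 2 * b + 1 else 2 * b)"
    and "\<phi> (2 * a + 1) = \<phi> (if tw a b then 2 * b else 2 * b + 1)"
  using assms unfolding edge_invariant_def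
  by (auto simp: twisted_cover_edges_def double_cover_vertices_def)

lemma twisted_cover_edge_invariant_sheets:
  assumes "EA \<subseteq> A \<times> A" "gconnected EA A"
    and inv: "edge_invariant (twisted_cover_edges EA tw) (double_cover_vertices A) \<phi>"
  obtains c where "\<And>a. a \<in> A \<Longrightarrow> \<phi> (2 * a + 1) \<longleftrightarrow> \<phi> (2 * a) \<noteq> c"
proof -
  define \<kappa> where "\<kappa> a \<longleftrightarrow> \<phi> (2 * a) \<noteq> \<phi> (2 * a + 1)" for a
  have "edge_invariant EA A \<kappa>"
    unfolding edge_invariant_def
  proof (intro ballI impI)
    fix a b
    assume "(a, b) \<in> EA"
    then show "\<kappa> a = \<kappa> b"
      using twisted_cover_edge_invariant_step[OF inv assms(1)] unfolding \<kappa>_def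
      by (cases "tw a b") auto
  qed
  then have "\<kappa> a = \<kappa> b" if "a \<in> A" "b \<in> A" for a b
    using gconnected_edge_invariant_eq[OF assms(2)] that by blast
  then show ?thesis
    using that unfolding \<kappa>_def by (cases "A = {}") blast+
qed

lemma twisted_cover_connected:
  assumes graph: "is_graph A EA" "gconnected EA A" "\<And>a b. tw a b \<Longrightarrow> tw b a" "\<And>a. \<not> tw a a"
    and no_potential: "\<nexists>\<sigma> :: nat \<Rightarrow> bool. \<forall>(a, b)\<in>EA. tw a b \<longleftrightarrow> \<sigma> a \<noteq> \<sigma> b"
  shows "gconnected (twisted_cover_edges EA tw) (double_cover_vertices A)"
proof (rule gconnected_if_edge_invariants_const)
  show "refl_on (double_cover_vertices A) (twisted_cover_edges EA tw)"
    "sym_on (double_cover_vertices A) (twisted_cover_edges EA tw)"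
    using is_graphD[OF is_graph_twisted_cover[of A EA tw, OF graph(1,3,4)]] by simp_all
  have EA: "EA \<subseteq> A \<times> A"
    using is_graphD(1)[OF graph(1)] .
  fix \<phi> :: "nat \<Rightarrow> bool"
  assume inv: "edge_invariant (twisted_cover_edges EA tw) (double_cover_vertices A) \<phi>"
  obtain c where sheets: "\<And>a. a \<in> A \<Longrightarrow> \<phi> (2 * a + 1) \<longleftrightarrow> \<phi> (2 * a) \<noteq> c"
    using twisted_cover_edge_invariant_sheets[OF EA graph(2) inv] by blast
  have jump: "\<phi> (2 * a) \<noteq> \<phi> (2 * b) \<longleftrightarrow> c \<and> tw a b" if "(a, b) \<in> EA" for a b
    using twisted_cover_edge_invariant_step(1)[OF inv EA that] sheets[of b] EA that
    by (cases "tw a b") auto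
  have "\<not> c"
  proof
    assume c
    then have potential: "tw a b \<longleftrightarrow> \<phi> (2 * a) \<noteq> \<phi> (2 * b)" if "(a, b) \<in> EA" for a b
      using jump[OF that] by simp
    have "\<exists>\<sigma> :: nat \<Rightarrow> bool. \<forall>(a, b)\<in>EA. tw a b \<longleftrightarrow> \<sigma> a \<noteq> \<sigma> b"
      by (intro exI[where x="\<lambda>a. \<phi> (2 * a)"]) (auto simp: potential)
    with no_potential show False ..
  qed
  then have "edge_invariant EA A (\<lambda>a. \<phi> (2 * a))"
    using jump unfolding edge_invariant_def by blast
  then have "\<phi> (2 * a) = \<phi> (2 * b)" if "a \<in> A" "b \<in> A" for a b
    using gconnected_edge_invariant_eq[OF graph(2)] that by blast
  moreover have "\<phi> m = \<phi> (2 * (m div 2))" if "m div 2 \<in> A" for m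
    using sheets[OF that] \<open>\<not> c\<close> odd_two_times_div_two_succ[of m] by (cases "even m") auto
  ultimately show "\<forall>m\<in>double_cover_vertices A. \<forall>n\<in>double_cover_vertices A. \<phi> m = \<phi> n"
    unfolding double_cover_vertices_def by (metis mem_Collect_eq)
qed

lemma fin_conn_graph_twisted_cover:
  assumes "fin_conn_graph A EA" "\<And>a b. tw a b \<Longrightarrow> tw b a" "\<And>a. \<not> tw a a"
    and "\<nexists>\<sigma> :: nat \<Rightarrow> bool. \<forall>(a, b)\<in>EA. tw a b \<longleftrightarrow> \<sigma> a \<noteq> \<sigma> b"
  shows "fin_conn_graph (double_cover_vertices A) (twisted_cover_edges EA tw)"
  using assms is_graph_twisted_cover[of A EA tw] twisted_cover_connected[of A EA tw]
  by (auto simp: fin_conn_graph_def finite_graph_def double_cover_vertices_eq)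

section \<open>Finite images of the intersection\<close>

definition separation_twist :: "'a set \<Rightarrow> 'a set \<Rightarrow> ('a \<Rightarrow> bool) \<Rightarrow> 'a \<Rightarrow> 'a \<Rightarrow> bool" where
  "separation_twist S T \<phi> a b \<longleftrightarrow> a \<in> T \<and> b \<in> T \<and> \<not> (a \<in> S \<and> b \<in> S) \<and> \<phi> a \<noteq> \<phi> b"

lemma separation_twist_potential_agrees:
  fixes S' T' :: "'c::discrete_topology set" and \<pi> :: "'c \<Rightarrow> 'a" and \<sigma> :: "'c \<Rightarrow> bool"
  assumes "gconnected E' S'" "gconnected E' T'" "\<pi> ` S' \<subseteq> S" "\<pi> ` T' \<subseteq> T"
    and edges: "\<And>m n. (m, n) \<in> E' \<Longrightarrow> (\<pi> m, \<pi> n) \<in> E"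
    and potential: "\<And>m n. (m, n) \<in> E' \<Longrightarrow> \<sigma> m \<noteq> \<sigma> n \<longleftrightarrow> separation_twist S T \<phi> (\<pi> m) (\<pi> n)"
    and inv: "edge_invariant E (S \<inter> T) \<phi>" and "x \<in> S' \<inter> T'" "y \<in> S' \<inter> T'"
  shows "\<phi> (\<pi> x) = \<phi> (\<pi> y)"
proof -
  have "edge_invariant E' S' \<sigma>"
    using potential assms(3) unfolding edge_invariant_def separation_twist_def by blast
  then have "\<sigma> x = \<sigma> y"
    using gconnected_edge_invariant_eq[OF assms(1)] assms(8,9) by blast
  moreover have "edge_invariant E' T' (\<lambda>m. \<sigma> m \<noteq> \<phi> (\<pi> m))"
    unfolding edge_invariant_def
  proof (intro ballI impI)
    fix m n
    assume mn: "m \<in> T'" "n \<in> T'" "(m, n) \<in> E'"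
    then have T: "\<pi> m \<in> T" "\<pi> n \<in> T"
      using assms(4) by auto
    show "(\<sigma> m \<noteq> \<phi> (\<pi> m)) = (\<sigma> n \<noteq> \<phi> (\<pi> n))"
    proof (cases "\<pi> m \<in> S \<and> \<pi> n \<in> S")
      case True
      then have "\<phi> (\<pi> m) = \<phi> (\<pi> n)"
        using inv edges[OF mn(3)] T unfolding edge_invariant_def by blast
      then show ?thesis
        using potential[OF mn(3)] unfolding separation_twist_def by auto
    next
      case False
      then show ?thesis
        using potential[OF mn(3)] T unfolding separation_twist_def by auto
    qed
  qed
  then have "(\<sigma> x \<noteq> \<phi> (\<pi> x)) = (\<sigma> y \<noteq> \<phi> (\<pi> y))"
    using gconnected_edge_invariant_eq[OF assms(2)] assms(8,9) by blast
  ultimately show ?thesis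
    by auto
qed

lemma separation_twist_no_potential:
  fixes S T :: "'a::discrete_topology set"
  assumes "gconnected E S" "gconnected E T" "edge_invariant E (S \<inter> T) \<phi>"
    and "x \<in> S \<inter> T" "y \<in> S \<inter> T" "\<phi> x \<noteq> \<phi> y"
  shows "\<nexists>\<sigma> :: 'a \<Rightarrow> bool. \<forall>(a, b)\<in>E. separation_twist S T \<phi> a b \<longleftrightarrow> \<sigma> a \<noteq> \<sigma> b"
proof
  assume "\<exists>\<sigma> :: 'a \<Rightarrow> bool. \<forall>(a, b)\<in>E. separation_twist S T \<phi> a b \<longleftrightarrow> \<sigma> a \<noteq> \<sigma> b"
  then obtain \<sigma> :: "'a \<Rightarrow> bool" where \<sigma>: "\<forall>(a, b)\<in>E. separation_twist S T \<phi> a b \<longleftrightarrow> \<sigma> a \<noteq> \<sigma> b"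
    by (elim exE)
  have "\<phi> (id x) = \<phi> (id y)"
    by (rule separation_twist_potential_agrees[where \<pi>=id and \<sigma>=\<sigma> and S'=S and T'=T])
      (use assms \<sigma> in auto)
  with assms(6) show False
    by simp
qed

lemma edge_invariant_image_intersection_eq:
  fixes f :: "'a::topological_space \<Rightarrow> nat" and \<phi> :: "nat \<Rightarrow> bool"
  assumes A: "fin_conn_graph A EA" and f: "confluent V E A EA f"
    and extension: "\<And>B EB g. fin_conn_graph B EB \<Longrightarrow> confluent B EB A EA g
      \<Longrightarrow> \<exists>h. confluent V E B EB h \<and> (\<forall>v\<in>V. f v = g (h v))"
    and PQ: "P \<subseteq> V" "Q \<subseteq> V" "gconnected E P" "gconnected E Q"
    and inv: "edge_invariant EA (f ` P \<inter> f ` Q) \<phi>" and xy: "x \<in> P \<inter> Q" "y \<in> P \<inter> Q"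
  shows "\<phi> (f x) = \<phi> (f y)"
proof (rule ccontr)
  assume differ: "\<phi> (f x) \<noteq> \<phi> (f y)"
  let ?tw = "separation_twist (f ` P) (f ` Q) \<phi>"
  let ?B = "double_cover_vertices A" and ?EB = "twisted_cover_edges EA ?tw"
  have tw: "?tw a b \<Longrightarrow> ?tw b a" "\<not> ?tw a a" for a b
    by (auto simp: separation_twist_def)
  have f_epi: "epimorphism V E A EA f"
    using f by (simp add: confluent_def)
  have fxy: "f x \<in> f ` P \<inter> f ` Q" "f y \<in> f ` P \<inter> f ` Q"
    using xy by auto
  have "\<nexists>\<sigma> :: nat \<Rightarrow> bool. \<forall>(a, b)\<in>EA. ?tw a b \<longleftrightarrow> \<sigma> a \<noteq> \<sigma> b"
    by (rule separation_twist_no_potential[OF epimorphism_gconnected_image[OF f_epi PQ(1,3)]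
        epimorphism_gconnected_image[OF f_epi PQ(2,4)] inv fxy differ])
  then have cover: "fin_conn_graph ?B ?EB" "confluent ?B ?EB A EA (\<lambda>m. m div 2)"
    using fin_conn_graph_twisted_cover[of A EA ?tw, OF A tw] twisted_cover_confluent[of A EA ?tw, OF _ tw] A
    by (auto simp: fin_conn_graph_def finite_graph_def)
  then obtain h where h: "confluent V E ?B ?EB h" "\<forall>v\<in>V. f v = h v div 2"
    using extension[OF cover] by blast
  have h_epi: "epimorphism V E ?B ?EB h"
    using h(1) by (simp add: confluent_def)
  have "gconnected ?EB (h ` P)" "gconnected ?EB (h ` Q)"
    by (rule epimorphism_gconnected_image[OF h_epi PQ(1,3)],
        rule epimorphism_gconnected_image[OF h_epi PQ(2,4)])
  moreover have "(\<lambda>m. m div 2) ` h ` P \<subseteq> f ` P" "(\<lambda>m. m div 2) ` h ` Q \<subseteq> f ` Q"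
    using h(2) PQ(1,2) by (force simp: image_iff)+
  ultimately have "\<phi> (h x div 2) = \<phi> (h y div 2)"
    by (rule separation_twist_potential_agrees[where \<sigma>=even and S="f ` P" and T="f ` Q"])
      (use inv xy in \<open>auto simp: twisted_cover_edges_def\<close>)
  then show False
    using differ h(2) xy PQ(1) by auto
qed

section \<open>Maps with small fibres\<close>

definition epsilon_map :: "'a::metric_space set \<Rightarrow> real \<Rightarrow> ('a \<Rightarrow> 'b) \<Rightarrow> bool" where
  "epsilon_map V \<epsilon> f \<longleftrightarrow> (\<forall>u\<in>V. \<forall>v\<in>V. f u = f v \<longrightarrow> dist u v < \<epsilon>)"

lemma epsilon_map_infdist_less:
  assumes "epsilon_map V \<epsilon> f" "u \<in> V" "v \<in> V" "f u = f v"
  shows "infdist u Z < infdist v Z + \<epsilon>"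
  using assms infdist_triangle[of u Z v] unfolding epsilon_map_def by fastforce

lemma epsilon_map_near_image_propagates:
  fixes V :: "'a::metric_space set"
  assumes "E \<subseteq> V \<times> V" "P \<subseteq> V" "Q \<subseteq> V" and \<eta>: "\<eta> > 0" "\<epsilon> \<le> \<eta> / 4" and fine: "epsilon_map V \<epsilon> f"
    and apart: "\<And>u v. infdist u X < \<eta> \<Longrightarrow> infdist v Y < \<eta> \<Longrightarrow> (u, v) \<notin> E"
    and close: "\<And>p q. p \<in> P \<Longrightarrow> q \<in> Q \<Longrightarrow> dist p q < \<epsilon> \<Longrightarrow> infdist p X < \<eta> / 4 \<or> infdist p Y < \<eta> / 4"
    and edge: "(u', u) \<in> E" and mid: "f u' \<in> f ` P \<inter> f ` Q"
    and v: "v \<in> V" "f v = f u" "infdist v Y < \<eta> / 2"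
  shows "infdist u' Y < \<eta> / 2"
proof -
  have u: "u \<in> V" "u' \<in> V"
    using edge assms(1) by auto
  obtain p q where pq: "p \<in> P" "q \<in> Q" "f p = f u'" "f q = f u'"
    using mid by auto
  have "p \<in> V" "q \<in> V"
    using pq(1,2) assms(2,3) by auto
  then have "dist p q < \<epsilon>"
    using fine pq(3,4) unfolding epsilon_map_def by auto
  then consider "infdist p Y < \<eta> / 4" | "infdist p X < \<eta> / 4"
    using close pq(1,2) by blast
  then show ?thesis
  proof cases
    case 1
    then show ?thesis
      using epsilon_map_infdist_less[OF fine u(2) \<open>p \<in> V\<close>, of Y] pq \<eta> by auto
  next
    case 2
    then have "infdist u' X < \<eta>"
      using epsilon_map_infdist_less[OF fine u(2) \<open>p \<in> V\<close>, of X] pq \<eta> by auto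
    moreover have "infdist u Y < \<eta>"
      using epsilon_map_infdist_less[OF fine u(1) v(1), of Y] v \<eta> by auto
    ultimately show ?thesis
      using apart edge by blast
  qed
qed

lemma separating_invariant_of_epsilon_map:
  fixes V :: "'a::metric_space set" and f :: "'a \<Rightarrow> 'b"
  assumes graph: "is_graph V E" and PQ: "P \<subseteq> V" "Q \<subseteq> V" and "X \<subseteq> V" "Y \<subseteq> V"
    and \<eta>: "\<eta> > 0" "\<epsilon> \<le> \<eta> / 4" and fine: "epsilon_map V \<epsilon> f"
    and apart: "\<And>u v. infdist u X < \<eta> \<Longrightarrow> infdist v Y < \<eta> \<Longrightarrow> (u, v) \<notin> E"
    and close: "\<And>p q. p \<in> P \<Longrightarrow> q \<in> Q \<Longrightarrow> dist p q < \<epsilon> \<Longrightarrow> infdist p X < \<eta> / 4 \<or> infdist p Y < \<eta> / 4"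
  shows "\<exists>\<phi>. edge_invariant ((\<lambda>(u, v). (f u, f v)) ` E) (f ` P \<inter> f ` Q) \<phi>
    \<and> (\<forall>x\<in>X. \<not> \<phi> (f x)) \<and> (\<forall>y\<in>Y. \<phi> (f y))"
proof -
  have E: "E \<subseteq> V \<times> V" "refl_on V E" "sym_on V E"
    using is_graphD[OF graph] .
  define \<phi> where "\<phi> a \<longleftrightarrow> (\<exists>v\<in>V. f v = a \<and> infdist v Y < \<eta> / 2)" for a
  have propagate: "\<phi> (f u) \<Longrightarrow> \<phi> (f u')" if "(u', u) \<in> E" "f u' \<in> f ` P \<inter> f ` Q" for u u'
  proof -
    assume "\<phi> (f u)"
    then obtain v where "v \<in> V" "f v = f u" "infdist v Y < \<eta> / 2"
      unfolding \<phi>_def by blast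
    then have "infdist u' Y < \<eta> / 2"
      using epsilon_map_near_image_propagates[OF E(1) PQ \<eta> fine, of X Y u' u v] apart close that
      by blast
    moreover have "u' \<in> V"
      using that(1) E(1) by auto
    ultimately show "\<phi> (f u')"
      unfolding \<phi>_def by blast
  qed
  have "edge_invariant ((\<lambda>(u, v). (f u, f v)) ` E) (f ` P \<inter> f ` Q) \<phi>"
    unfolding edge_invariant_def
  proof (intro ballI impI)
    fix a b
    assume ab: "a \<in> f ` P \<inter> f ` Q" "b \<in> f ` P \<inter> f ` Q" "(a, b) \<in> (\<lambda>(u, v). (f u, f v)) ` E"
    then obtain u u' where uu: "(u, u') \<in> E" "a = f u" "b = f u'"
      by auto
    then have "u \<in> V" "u' \<in> V"
      using E(1) by auto
    then have "(u', u) \<in> E"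
      by (rule sym_onD[OF E(3) _ _ uu(1)])
    then show "\<phi> a = \<phi> b"
      using propagate[of u u'] propagate[of u' u] uu ab(1,2) by auto
  qed
  moreover have "\<not> \<phi> (f x)" if "x \<in> X" for x
  proof
    assume "\<phi> (f x)"
    then obtain v where v: "v \<in> V" "f v = f x" "infdist v Y < \<eta> / 2"
      unfolding \<phi>_def by blast
    have "infdist v X < \<eta>"
      using epsilon_map_infdist_less[OF fine v(1), of x X] that assms(4) v(2) \<eta> by auto
    then show False
      using apart[of v v] v refl_onD[OF E(2) v(1)] \<eta>(1) by auto
  qed
  moreover have "\<phi> (f y)" if "y \<in> Y" for y
    using that assms(5) \<eta>(1) unfolding \<phi>_def by auto
  ultimately show ?thesis
    by blast
qed

lemma epsilon_maps_keep_separation: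
  fixes V :: "'a::metric_space set"
  assumes "is_graph V E" "compact V" "closed E" "P \<subseteq> V" "Q \<subseteq> V" "closed P" "closed Q"
    and XY: "X \<noteq> {}" "Y \<noteq> {}" "closed X" "closed Y" "X \<union> Y = P \<inter> Q" "\<forall>a\<in>X. \<forall>b\<in>Y. (a, b) \<notin> E"
  obtains \<epsilon> where "\<epsilon> > 0"
    and "\<And>f :: 'a \<Rightarrow> 'b. epsilon_map V \<epsilon> f \<Longrightarrow>
      \<exists>\<phi>. edge_invariant ((\<lambda>(u, v). (f u, f v)) ` E) (f ` P \<inter> f ` Q) \<phi>
        \<and> (\<forall>x\<in>X. \<not> \<phi> (f x)) \<and> (\<forall>y\<in>Y. \<phi> (f y))"
proof -
  have sub: "X \<subseteq> V" "Y \<subseteq> V"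
    using XY(5) assms(4) by auto
  have compact: "compact Z" if "Z \<subseteq> V" "closed Z" for Z
    using compact_Int_closed[OF assms(2) that(2)] that(1) by (simp add: Int_absorb1)
  obtain \<eta> where \<eta>: "\<eta> > 0" "\<And>u v. infdist u X < \<eta> \<Longrightarrow> infdist v Y < \<eta> \<Longrightarrow> (u, v) \<notin> E"
    using closed_relation_avoids_thickenings[of X Y E] compact sub XY assms(3) by blast
  obtain \<epsilon>' where \<epsilon>': "\<epsilon>' > 0"
    "\<And>p q. p \<in> P \<Longrightarrow> q \<in> Q \<Longrightarrow> dist p q < \<epsilon>' \<Longrightarrow> infdist p (P \<inter> Q) < \<eta> / 4"
    using close_points_near_intersection[of P Q "\<eta> / 4"] compact assms(4,6,7) \<eta>(1) by auto
  define \<epsilon> where "\<epsilon> = min \<epsilon>' (\<eta> / 4)"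
  have \<epsilon>: "\<epsilon> > 0" "\<epsilon> \<le> \<eta> / 4"
    using \<epsilon>'(1) \<eta>(1) by (simp_all add: \<epsilon>_def)
  have close: "infdist p X < \<eta> / 4 \<or> infdist p Y < \<eta> / 4"
    if "p \<in> P" "q \<in> Q" "dist p q < \<epsilon>" for p q
    using \<epsilon>'(2)[OF that(1,2)] that(3) infdist_Un_min[OF XY(1,2), of p] XY(5)
    unfolding \<epsilon>_def by auto
  show ?thesis
  proof (rule that[OF \<epsilon>(1)])
    fix f :: "'a \<Rightarrow> 'b"
    assume "epsilon_map V \<epsilon> f"
    then show "\<exists>\<phi>. edge_invariant ((\<lambda>(u, v). (f u, f v)) ` E) (f ` P \<inter> f ` Q) \<phi>
        \<and> (\<forall>x\<in>X. \<not> \<phi> (f x)) \<and> (\<forall>y\<in>Y. \<phi> (f y))"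
      using separating_invariant_of_epsilon_map[where \<eta>=\<eta> and \<epsilon>=\<epsilon> and f=f] assms(1,4,5) sub \<eta> \<epsilon> close
      by blast
  qed
qed

lemma proj_fraisse_limit_epsilon_map:
  assumes "is_proj_fraisse_limit V E" "\<epsilon> > 0"
  obtains A EA f where "fin_conn_graph A EA" "confluent V E A EA f" "epsilon_map V \<epsilon> f"
proof -
  have "\<forall>\<epsilon>>0. \<exists>A EA f. fin_conn_graph A EA \<and> confluent V E A EA f
      \<and> (\<forall>a\<in>A. diameter (V \<inter> f -` {a}) < \<epsilon>)"
    using assms(1) unfolding is_proj_fraisse_limit_def by (elim conjE)
  then obtain A EA f where A: "fin_conn_graph A EA" "confluent V E A EA f"
    and small: "\<forall>a\<in>A. diameter (V \<inter> f -` {a}) < \<epsilon>"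
    using assms(2) by blast
  have "compact V"
    using assms(1) by (simp add: is_proj_fraisse_limit_def topological_graph_def)
  then have "bounded V"
    by (rule compact_imp_bounded)
  have "dist u v < \<epsilon>" if "u \<in> V" "v \<in> V" "f u = f v" for u v
  proof -
    have "f u \<in> A"
      using A(2) that(1) unfolding confluent_def epimorphism_def by blast
    then have "diameter (V \<inter> f -` {f u}) < \<epsilon>"
      using small by blast
    moreover have "dist u v \<le> diameter (V \<inter> f -` {f u})"
      using bounded_subset[OF \<open>bounded V\<close>] that by (intro diameter_bounded_bound) auto
    ultimately show ?thesis
      by linarith
  qed
  then show ?thesis
    using that A unfolding epsilon_map_def by blast
qed

lemma proj_fraisse_limit_no_separation:
  fixes V :: "'a::metric_space set"
  assumes lim: "is_proj_fraisse_limit V E"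
    and PQ: "P \<subseteq> V" "Q \<subseteq> V" "closed P" "closed Q" "gconnected E P" "gconnected E Q"
    and XY: "X \<noteq> {}" "Y \<noteq> {}" "closed X" "closed Y" "X \<union> Y = P \<inter> Q" "\<forall>a\<in>X. \<forall>b\<in>Y. (a, b) \<notin> E"
  shows False
proof -
  have G: "is_graph V E" "compact V" "closed E"
    using lim by (simp_all add: is_proj_fraisse_limit_def topological_graph_def)
  obtain \<epsilon> where "\<epsilon> > 0" and separate: "\<And>f :: 'a \<Rightarrow> nat. epsilon_map V \<epsilon> f \<Longrightarrow>
      \<exists>\<phi>. edge_invariant ((\<lambda>(u, v). (f u, f v)) ` E) (f ` P \<inter> f ` Q) \<phi>
        \<and> (\<forall>x\<in>X. \<not> \<phi> (f x)) \<and> (\<forall>y\<in>Y. \<phi> (f y))"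
    using epsilon_maps_keep_separation[OF G PQ(1-4) XY] by blast
  then obtain A EA f where A: "fin_conn_graph A EA" "confluent V E A EA f" "epsilon_map V \<epsilon> f"
    using proj_fraisse_limit_epsilon_map[OF lim] by blast
  moreover have "(\<lambda>(u, v). (f u, f v)) ` E = EA"
    using A(2) by (simp add: confluent_def epimorphism_def)
  ultimately obtain \<phi> where \<phi>: "edge_invariant EA (f ` P \<inter> f ` Q) \<phi>"
    "\<forall>x\<in>X. \<not> \<phi> (f x)" "\<forall>y\<in>Y. \<phi> (f y)"
    using separate by metis
  obtain x y where "x \<in> X" "y \<in> Y"
    using XY(1,2) by blast
  moreover have "\<phi> (f x) = \<phi> (f y)" if "x \<in> P \<inter> Q" "y \<in> P \<inter> Q" for x y
    using edge_invariant_image_intersection_eq[OF A(1,2) _ PQ(1,2,5,6) \<phi>(1) that] lim A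
    unfolding is_proj_fraisse_limit_def by blast
  ultimately show False
    using \<phi>(2,3) XY(5) by blast
qed

theorem mainTheorem14:
  fixes V :: "'a::metric_space set" and E :: "('a \<times> 'a) set"
  assumes "is_proj_fraisse_limit V E"
  shows "\<forall>P Q. P \<subseteq> V \<and> Q \<subseteq> V \<and> closed P \<and> closed Q
           \<and> gconnected E P \<and> gconnected E Q \<longrightarrow> gconnected E (P \<inter> Q)"
proof (intro allI impI)
  fix P Q
  assume "P \<subseteq> V \<and> Q \<subseteq> V \<and> closed P \<and> closed Q \<and> gconnected E P \<and> gconnected E Q"
  then have PQ: "P \<subseteq> V" "Q \<subseteq> V" "closed P" "closed Q" "gconnected E P" "gconnected E Q"
    by auto
  show "gconnected E (P \<inter> Q)"
  proof (rule gconnectedI)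
    fix X Y
    assume XY: "X \<noteq> {}" "Y \<noteq> {}" "closedin (top_of_set (P \<inter> Q)) X" "closedin (top_of_set (P \<inter> Q)) Y"
      "X \<union> Y = P \<inter> Q" "\<forall>a\<in>X. \<forall>b\<in>Y. (a, b) \<notin> E"
    have "closed X" "closed Y"
      using XY(3,4) PQ(3,4) by (auto intro: closedin_closed_trans)
    then show False
      using proj_fraisse_limit_no_separation[OF assms PQ XY(1,2) _ _ XY(5,6)] by blast
  qed
qed

end
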